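(* Let $i\ge 0$ be an integer and let $G$ be an $\alpha_i$-metric graph. Then $diam(C(G))\le 3i+2$, i.e., any two central vertices of $G$ are at distance at most $3i+2$ in $G$.
   Context: All graphs are finite, connected, unweighted, undirected, without loops or multiple edges; $d(u,v)$ is the shortest-path distance in $G$. The interval $I(u,v)=\{x: d(u,x)+d(x,v)=d(u,v)\}$. A graph is $\alpha_i$-metric if for all vertices $u,v,w,x$: whenever $v\in I(u,w)$, $w\in I(v,x)$ and $v,w$ are adjacent, then $d(u,x)\ge d(u,v)+d(v,x)-i$. The eccentricity is $e(v)=\max_{u}d(u,v)$, the radius $rad(G)=\min_v e(v)$, and the center $C(G)=\{v: e(v)=rad(G)\}$; $diam(C(G))=\max\{d(x,y): x,y\in C(G)\}$ with distances taken in $G$. *)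

theory Defs
  imports Main
begin

definition graph :: "'a set \<Rightarrow> ('a \<Rightarrow> 'a \<Rightarrow> bool) \<Rightarrow> bool" where
  "graph V E \<longleftrightarrow> finite V \<and> V \<noteq> {} \<and> (\<forall>u v. E u v \<longrightarrow> u \<in> V \<and> v \<in> V)
     \<and> (\<forall>u v. E u v \<longrightarrow> E v u) \<and> (\<forall>v. \<not> E v v)"

definition walk :: "('a \<Rightarrow> 'a \<Rightarrow> bool) \<Rightarrow> 'a list \<Rightarrow> bool" where
  "walk E xs \<longleftrightarrow> xs \<noteq> [] \<and> (\<forall>k. Suc k < length xs \<longrightarrow> E (xs ! k) (xs ! Suc k))"

definition has_walk :: "'a set \<Rightarrow> ('a \<Rightarrow> 'a \<Rightarrow> bool) \<Rightarrow> 'a \<Rightarrow> 'a \<Rightarrow> nat \<Rightarrow> bool" where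
  "has_walk V E u v n \<longleftrightarrow> (\<exists>xs. walk E xs \<and> set xs \<subseteq> V \<and> hd xs = u \<and> last xs = v \<and> length xs = Suc n)"

definition connected_graph :: "'a set \<Rightarrow> ('a \<Rightarrow> 'a \<Rightarrow> bool) \<Rightarrow> bool" where
  "connected_graph V E \<longleftrightarrow> graph V E \<and> (\<forall>u\<in>V. \<forall>v\<in>V. \<exists>n. has_walk V E u v n)"

definition gdist :: "'a set \<Rightarrow> ('a \<Rightarrow> 'a \<Rightarrow> bool) \<Rightarrow> 'a \<Rightarrow> 'a \<Rightarrow> nat" where
  "gdist V E u v = (LEAST n. has_walk V E u v n)"

definition interval :: "'a set \<Rightarrow> ('a \<Rightarrow> 'a \<Rightarrow> bool) \<Rightarrow> 'a \<Rightarrow> 'a \<Rightarrow> 'a set" where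
  "interval V E u v = {x \<in> V. gdist V E u x + gdist V E x v = gdist V E u v}"

definition alpha_metric :: "nat \<Rightarrow> 'a set \<Rightarrow> ('a \<Rightarrow> 'a \<Rightarrow> bool) \<Rightarrow> bool" where
  "alpha_metric i V E \<longleftrightarrow> (\<forall>u\<in>V. \<forall>v\<in>V. \<forall>w\<in>V. \<forall>x\<in>V.
      v \<in> interval V E u w \<and> w \<in> interval V E v x \<and> E v w \<longrightarrow>
      int (gdist V E u x) \<ge> int (gdist V E u v) + int (gdist V E v x) - int i)"

definition ecc :: "'a set \<Rightarrow> ('a \<Rightarrow> 'a \<Rightarrow> bool) \<Rightarrow> 'a \<Rightarrow> nat" where
  "ecc V E v = Max ((\<lambda>u. gdist V E u v) ` V)"

definition radius :: "'a set \<Rightarrow> ('a \<Rightarrow> 'a \<Rightarrow> bool) \<Rightarrow> nat" where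
  "radius V E = Min (ecc V E ` V)"

definition center :: "'a set \<Rightarrow> ('a \<Rightarrow> 'a \<Rightarrow> bool) \<Rightarrow> 'a set" where
  "center V E = {v \<in> V. ecc V E v = radius V E}"

end

(*
  Suppose x, y are central at distance k >= 3i+3, let p be a geodesic from x to y, r the radius,
  and u a vertex farthest from p(i+1), so that d(u,p(i+1)) >= r while d(u,x), d(u,y) <= r.
  Applied to u, consecutive vertices of p and x, the alpha_i condition forbids d(u,-) to drop
  along p after index i+1 while it is >= r; hence d(u,p(s)) = r for i+1 <= s <= k.
  A neighbour q of p(i+1) that is closer to u is, again by the alpha_i condition, no farther
  than p(i+1) from x and from p(2i+2), so p(2i+2) lies in the interval I(q,y). On a geodesic
  from q to p(2i+2) the distance to u climbs from r-1 to r across some edge vw, and the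
  alpha_i condition for u, v, w, y then forces d(u,y) > r, a contradiction.
*)
theory Submission
  imports Defs
begin

definition graph_path :: "'a set \<Rightarrow> ('a \<Rightarrow> 'a \<Rightarrow> bool) \<Rightarrow> (nat \<Rightarrow> 'a) \<Rightarrow> nat \<Rightarrow> bool" where
  "graph_path V E p n \<longleftrightarrow> (\<forall>s\<le>n. p s \<in> V) \<and> (\<forall>s<n. E (p s) (p (Suc s)))"

lemma has_walk_iff_graph_path:
  "has_walk V E u v n \<longleftrightarrow> (\<exists>p. graph_path V E p n \<and> p 0 = u \<and> p n = v)"
proof
  assume "has_walk V E u v n"
  then obtain xs where xs: "walk E xs" "set xs \<subseteq> V" "hd xs = u" "last xs = v" "length xs = Suc n"
    unfolding has_walk_def by blast
  then have "graph_path V E (nth xs) n \<and> xs ! 0 = u \<and> xs ! n = v"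
    by (auto simp: graph_path_def walk_def hd_conv_nth last_conv_nth
             intro!: nth_mem[THEN subsetD[OF xs(2)]])
  then show "\<exists>p. graph_path V E p n \<and> p 0 = u \<and> p n = v" by blast
next
  assume "\<exists>p. graph_path V E p n \<and> p 0 = u \<and> p n = v"
  then obtain p where p: "graph_path V E p n" "p 0 = u" "p n = v" by blast
  have "walk E (map p [0..<Suc n])"
    using p(1) by (auto simp: walk_def graph_path_def simp del: upt_Suc)
  moreover have "set (map p [0..<Suc n]) \<subseteq> V"
    using p(1) by (auto simp: graph_path_def)
  ultimately show "has_walk V E u v n"
    unfolding has_walk_def using p(2,3)
    by (intro exI[of _ "map p [0..<Suc n]"]) (simp add: hd_map last_map del: upt_Suc)
qed

lemma graph_path_shift:
  assumes "graph_path V E p n" "s \<le> t" "t \<le> n"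
  shows "graph_path V E (\<lambda>r. p (s + r)) (t - s)"
  using assms by (auto simp: graph_path_def)

lemma graph_path_reverse:
  assumes "graph_path V E p n" "\<And>u v. E u v \<Longrightarrow> E v u"
  shows "graph_path V E (\<lambda>s. p (n - s)) n"
  unfolding graph_path_def
proof (intro conjI allI impI)
  fix s assume "s < n"
  then have "E (p (n - Suc s)) (p (Suc (n - Suc s)))" and "Suc (n - Suc s) = n - s"
    using assms(1) unfolding graph_path_def by auto
  then show "E (p (n - s)) (p (n - Suc s))" using assms(2) by metis
qed (use assms(1) in \<open>auto simp: graph_path_def\<close>)

lemma graph_path_append:
  assumes "graph_path V E p m" "graph_path V E q n" "p m = q 0"
  shows "graph_path V E (\<lambda>s. if s \<le> m then p s else q (s - m)) (m + n)"
  unfolding graph_path_def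
proof (intro conjI allI impI)
  fix s assume "s < m + n"
  then show "E (if s \<le> m then p s else q (s - m)) (if Suc s \<le> m then p (Suc s) else q (Suc s - m))"
    using assms unfolding graph_path_def
    by (cases "s < m"; cases "s = m") (auto simp: Suc_diff_le)
qed (use assms in \<open>auto simp: graph_path_def\<close>)

lemma nat_seq_threshold_crossing:
  fixes f :: "nat \<Rightarrow> 'a::linorder"
  assumes "f 0 < r" "r \<le> f n"
  shows "\<exists>s<n. f s < r \<and> r \<le> f (Suc s)"
  using assms
proof (induction n)
  case (Suc n)
  then show ?case by (metis less_Suc_eq not_le)
qed simp

locale finite_connected_graph =
  fixes V :: "'a set" and E :: "'a \<Rightarrow> 'a \<Rightarrow> bool"
  assumes connected: "connected_graph V E"
begin

abbreviation d :: "'a \<Rightarrow> 'a \<Rightarrow> nat" where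
  "d \<equiv> gdist V E"

lemma finite_vertices: "finite V" and vertices_nonempty: "V \<noteq> {}"
  and adjacent_vertices: "E u v \<Longrightarrow> u \<in> V \<and> v \<in> V"
  and adjacent_sym: "E u v \<Longrightarrow> E v u" and not_adjacent_self: "\<not> E v v"
  using connected unfolding connected_graph_def graph_def by auto

lemma gdist_le_path_length: "graph_path V E p n \<Longrightarrow> d (p 0) (p n) \<le> n"
  unfolding gdist_def by (rule Least_le) (auto simp: has_walk_iff_graph_path)

lemma geodesic_exists:
  assumes "u \<in> V" "v \<in> V"
  obtains p where "graph_path V E p (d u v)" "p 0 = u" "p (d u v) = v"
proof -
  have "\<exists>n. has_walk V E u v n" using connected assms unfolding connected_graph_def by blast
  then have "has_walk V E u v (d u v)" unfolding gdist_def by (rule LeastI_ex)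
  then show ?thesis using that by (auto simp: has_walk_iff_graph_path)
qed

lemma gdist_triangle:
  assumes "u \<in> V" "v \<in> V" "w \<in> V"
  shows "d u w \<le> d u v + d v w"
proof -
  obtain p where p: "graph_path V E p (d u v)" "p 0 = u" "p (d u v) = v"
    using geodesic_exists assms(1,2) .
  obtain q where q: "graph_path V E q (d v w)" "q 0 = v" "q (d v w) = w"
    using geodesic_exists assms(2,3) .
  show ?thesis
    using gdist_le_path_length[OF graph_path_append[OF p(1) q(1)]] p q by (simp split: if_splits)
qed

lemma gdist_commute:
  assumes "u \<in> V" "v \<in> V"
  shows "d u v = d v u"
proof -
  have "d v u \<le> d u v" if uv: "u \<in> V" "v \<in> V" for u v
  proof -
    obtain p where p: "graph_path V E p (d u v)" "p 0 = u" "p (d u v) = v"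
      using geodesic_exists uv .
    show ?thesis
      using gdist_le_path_length[OF graph_path_reverse[OF p(1) adjacent_sym]] p by simp
  qed
  then show ?thesis using assms by (simp add: le_antisym)
qed

lemma gdist_eq_0_iff:
  assumes "u \<in> V" "v \<in> V"
  shows "d u v = 0 \<longleftrightarrow> u = v"
proof
  assume "d u v = 0"
  then show "u = v" using geodesic_exists[OF assms] by metis
next
  assume "u = v"
  then show "d u v = 0"
    using gdist_le_path_length[of "\<lambda>_. u" 0] assms by (simp add: graph_path_def)
qed

lemma gdist_adjacent: "E u v \<Longrightarrow> d u v = 1"
proof -
  assume uv: "E u v"
  have "graph_path V E (\<lambda>s. if s = 0 then u else v) 1"
    using uv adjacent_vertices by (auto simp: graph_path_def le_Suc_eq)
  then have "d u v \<le> 1" using gdist_le_path_length by fastforce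
  moreover have "d u v \<noteq> 0" using gdist_eq_0_iff uv adjacent_vertices not_adjacent_self by blast
  ultimately show ?thesis by simp
qed

lemma gdist_adjacent_le: "E v w \<Longrightarrow> u \<in> V \<Longrightarrow> d u w \<le> d u v + 1"
  using gdist_triangle[of u v w] gdist_adjacent adjacent_vertices by fastforce

lemma geodesic_gdist:
  assumes p: "graph_path V E p n" "d (p 0) (p n) = n" and "s \<le> t" "t \<le> n"
  shows "d (p s) (p t) = t - s"
proof -
  have subpath_le: "d (p a) (p b) \<le> b - a" if "a \<le> b" "b \<le> n" for a b
    using gdist_le_path_length[OF graph_path_shift[OF p(1) that]] that by simp
  have "\<And>a. a \<le> n \<Longrightarrow> p a \<in> V" using p(1) by (simp add: graph_path_def)
  then have "n \<le> d (p 0) (p s) + d (p s) (p t) + d (p t) (p n)"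
    using gdist_triangle[of "p 0" "p s" "p t"] gdist_triangle[of "p 0" "p t" "p n"] assms
    by fastforce
  then show ?thesis
    using p(2) subpath_le[of 0 s] subpath_le[of s t] subpath_le[of t n] assms(3,4) by linarith
qed

lemma exists_neighbour_closer:
  assumes "u \<in> V" "v \<in> V" "u \<noteq> v"
  obtains w where "E u w" "d w v + 1 = d u v"
proof -
  obtain p where p: "graph_path V E p (d u v)" "p 0 = u" "p (d u v) = v"
    using geodesic_exists assms(1,2) .
  have pos: "0 < d u v" using gdist_eq_0_iff assms by auto
  have "E u (p 1)" using p pos by (auto simp: graph_path_def)
  moreover have "d (p 1) v = d u v - 1"
    using geodesic_gdist[of p "d u v" 1 "d u v"] p pos by simp
  ultimately show ?thesis using that pos by simp
qed

lemma gdist_le_ecc: "u \<in> V \<Longrightarrow> v \<in> V \<Longrightarrow> d u v \<le> ecc V E v"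
  unfolding ecc_def using finite_vertices by (intro Max_ge) auto

lemma ecc_attained:
  assumes "v \<in> V"
  obtains u where "u \<in> V" "d u v = ecc V E v"
proof -
  have "ecc V E v \<in> (\<lambda>u. d u v) ` V"
    unfolding ecc_def using finite_vertices vertices_nonempty by (intro Max_in) auto
  then show ?thesis using that by auto
qed

lemma radius_le_ecc: "v \<in> V \<Longrightarrow> radius V E \<le> ecc V E v"
  unfolding radius_def using finite_vertices by (intro Min_le) auto

end

locale alpha_metric_graph = finite_connected_graph +
  fixes i :: nat
  assumes alpha_metric: "alpha_metric i V E"
begin

lemma closer_neighbour_not_farther:
  assumes vw: "E v w" "d U w = d U v + 1" and gap: "d U X + i < d U w + d w X"
    and "U \<in> V" "X \<in> V"
  shows "d v X \<le> d w X"
proof (rule ccontr)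
  assume "\<not> ?thesis"
  moreover have "d X v \<le> d X w + 1" using gdist_adjacent_le adjacent_sym vw(1) assms(5) by blast
  ultimately have away: "d v X = d w X + 1"
    using gdist_commute adjacent_vertices vw(1) assms(5) by fastforce
  have "v \<in> interval V E U w" "w \<in> interval V E v X"
    using vw away gdist_adjacent adjacent_vertices unfolding interval_def by auto
  then have "int (d U v) + int (d v X) - int i \<le> int (d U X)"
    using alpha_metric adjacent_vertices vw(1) assms(4,5) unfolding alpha_metric_def by blast
  then show False using vw(2) gap away by linarith
qed

lemma far_vertex_gdist_constant_on_geodesic:
  assumes p: "graph_path V E p k" "d (p 0) (p k) = k"
    and u: "u \<in> V" "d u (p 0) \<le> r" "d u (p k) \<le> r"
    and s: "i < j" "j \<le> s" "s \<le> k" and far: "r \<le> d u (p j)"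
  shows "d u (p s) = r"
proof -
  have pV: "p a \<in> V" if "a \<le> k" for a using p(1) that by (simp add: graph_path_def)
  have pE: "E (p a) (p (Suc a))" if "a < k" for a using p(1) that by (simp add: graph_path_def)
  have from_start: "d (p b) (p 0) = b" if "b \<le> k" for b
    using geodesic_gdist[OF p, of 0 b] gdist_commute pV that by simp
  have no_descent: "d u (p a) \<le> d u (p (Suc a))" if a: "j \<le> a" "a < k" "r \<le> d u (p a)" for a
  proof (rule ccontr)
    assume "\<not> ?thesis"
    then have "d u (p a) = d u (p (Suc a)) + 1"
      using gdist_adjacent_le[OF adjacent_sym[OF pE] u(1), of a] a(2) by simp
    then have "d (p (Suc a)) (p 0) \<le> d (p a) (p 0)"
      using closer_neighbour_not_farther[OF adjacent_sym[OF pE] _ _ u(1) pV, of a 0] from_start a s(1) u(2)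
      by simp
    then show False using from_start a(2) by simp
  qed
  have mono: "d u (p a) \<le> d u (p b)" if "r \<le> d u (p a)" "j \<le> a" "a \<le> b" "b \<le> k" for a b
    using that(3,4)
  proof (induction b rule: dec_induct)
    case (step b)
    then show ?case using no_descent[of b] that(1,2) by simp
  qed simp
  have "r \<le> d u (p s)" using mono[OF far, of s] s far by simp
  then show ?thesis using mono[of s k] s u(3) by simp
qed

lemma interval_start_not_closer:
  assumes z: "z \<in> interval V E q y" and "q \<in> V" "y \<in> V" "u \<in> V"
    and "d u y \<le> d u z" "i < d z y"
  shows "d u z \<le> d u q"
proof (rule ccontr)
  assume closer: "\<not> ?thesis"
  have zV: "z \<in> V" and qzy: "d q z + d z y = d q y" using z unfolding interval_def by auto
  obtain g where g: "graph_path V E g (d q z)" "g 0 = q" "g (d q z) = z"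
    using geodesic_exists \<open>q \<in> V\<close> zV .
  obtain s where s: "s < d q z" "d u (g s) < d u z" "d u z \<le> d u (g (Suc s))"
    using nat_seq_threshold_crossing[of "\<lambda>s. d u (g s)" "d u z" "d q z"] g closer by auto
  define v w where "v = g s" and "w = g (Suc s)"
  have vw: "E v w" "v \<in> V" "w \<in> V"
    using g(1) s(1) adjacent_vertices unfolding v_def w_def graph_path_def by auto
  have uvw: "d u w = d u v + 1"
    using gdist_adjacent_le[OF vw(1) \<open>u \<in> V\<close>] s(2,3) unfolding v_def w_def by simp
  have qv: "d q v = s" and wz: "d w z = d q z - Suc s"
    using geodesic_gdist[OF g(1), of 0 s] geodesic_gdist[OF g(1), of "Suc s" "d q z"] g(2,3) s(1)
    unfolding v_def w_def by simp_all
  have vy: "d q y \<le> s + d v y" using gdist_triangle[OF \<open>q \<in> V\<close> vw(2) \<open>y \<in> V\<close>] qv by simp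
  have wy: "d w y \<le> d q z - Suc s + d z y" using gdist_triangle[OF vw(3) zV \<open>y \<in> V\<close>] wz by simp
  have "d v y \<le> d w y + 1"
    using gdist_adjacent_le[OF adjacent_sym[OF vw(1)] \<open>y \<in> V\<close>] gdist_commute vw(2,3) \<open>y \<in> V\<close>
    by simp
  then have "i < d w y" using vy qzy s(1) assms(6) by linarith
  then have "d u y + i < d u w + d w y" using assms(5) s(3) unfolding w_def by linarith
  then have "d v y \<le> d w y"
    using closer_neighbour_not_farther[OF vw(1) uvw] \<open>u \<in> V\<close> \<open>y \<in> V\<close> by blast
  then show False using vy wy qzy s(1) by linarith
qed

lemma interval_from_closer_neighbour:
  assumes p: "graph_path V E p k" "d (p 0) (p k) = k"
    and u: "u \<in> V" "d u (p 0) \<le> r" "d u (p j) = r" "d u (p m) = r"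
    and q: "E (p j) q" "d u (p j) = d u q + 1"
    and jm: "i < j" "i < m - j" "j \<le> m" "m \<le> k"
  shows "p m \<in> interval V E q (p k)"
proof -
  have geo: "d (p a) (p b) = b - a" if "a \<le> b" "b \<le> k" for a b
    using geodesic_gdist[OF p] that .
  have pV: "p a \<in> V" if "a \<le> k" for a using p(1) that by (simp add: graph_path_def)
  have pjV: "p j \<in> V" and pmV: "p m \<in> V" and qV: "q \<in> V"
    using pV jm q(1) adjacent_vertices by auto
  note q_not_farther = closer_neighbour_not_farther[OF adjacent_sym[OF q(1)] q(2) _ u(1)]
  have "d (p j) (p 0) = j" "d (p j) (p m) = m - j" "d (p m) (p k) = k - m"
    using geo[of 0 j] geo[of j m] geo[of m k] gdist_commute[OF pV pjV, of 0] jm by simp_all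
  moreover have "d q (p 0) \<le> d (p j) (p 0)"
    by (rule q_not_farther) (use u geo[of 0 j] gdist_commute[OF pV pjV] pV jm in simp_all)
  moreover have "d q (p m) \<le> d (p j) (p m)"
    by (rule q_not_farther) (use u geo[of j m] pmV jm in simp_all)
  moreover have "k \<le> d q (p 0) + d q (p k)"
    using gdist_triangle[of "p 0" q "p k"] gdist_commute[of "p 0" q] p(2) qV pV jm by simp
  moreover have "d q (p k) \<le> d q (p m) + d (p m) (p k)"
    using gdist_triangle qV pV pmV jm by simp
  ultimately have "d q (p m) + d (p m) (p k) = d q (p k)" using jm by linarith
  then show ?thesis using pmV unfolding interval_def by simp
qed

lemma center_gdist_le:
  assumes "x \<in> center V E" "y \<in> center V E"
  shows "d x y \<le> 3 * i + 2"
proof (rule ccontr)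
  assume far_apart: "\<not> ?thesis"
  define k r j m where "k = d x y" and "r = radius V E" and "j = i + 1" and "m = 2 * i + 2"
  have x: "x \<in> V" "ecc V E x = r" and y: "y \<in> V" "ecc V E y = r"
    using assms unfolding center_def r_def by auto
  have k: "3 * i + 3 \<le> k" "k \<le> r"
    using far_apart gdist_le_ecc[OF x(1) y(1)] y(2) unfolding k_def by auto
  then have jm: "i < j" "i < m - j" "j \<le> m" "m \<le> k" "i < k - m" unfolding j_def m_def by auto
  obtain p where p: "graph_path V E p k" "p 0 = x" "p k = y"
    using geodesic_exists[OF x(1) y(1)] unfolding k_def .
  have p_geodesic: "d (p 0) (p k) = k" using p(2,3) unfolding k_def by simp
  have pV: "p a \<in> V" if "a \<le> k" for a using p(1) that by (simp add: graph_path_def)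
  have pjV: "p j \<in> V" using pV jm by auto
  obtain u where u: "u \<in> V" "d u (p j) = ecc V E (p j)" using ecc_attained[OF pjV] .
  have ux: "d u (p 0) \<le> r" and uy: "d u (p k) \<le> r"
    using gdist_le_ecc[OF u(1) x(1)] gdist_le_ecc[OF u(1) y(1)] x(2) y(2) p(2,3) by simp_all
  have "r \<le> d u (p j)" using radius_le_ecc[OF pjV] u(2) unfolding r_def by simp
  then have uj: "d u (p j) = r" and um: "d u (p m) = r"
    using far_vertex_gdist_constant_on_geodesic[OF p(1) p_geodesic u(1) ux uy jm(1)] jm by simp_all
  then have "p j \<noteq> u" using gdist_eq_0_iff[OF u(1) u(1)] k by auto
  then obtain q where q: "E (p j) q" "d q u + 1 = d (p j) u"
    using exists_neighbour_closer[OF pjV u(1)] by blast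
  have qV: "q \<in> V" using q(1) adjacent_vertices by blast
  have uq: "d u (p j) = d u q + 1" using q(2) gdist_commute[OF u(1)] qV pjV by simp
  have "p m \<in> interval V E q (p k)"
    using interval_from_closer_neighbour[OF p(1) p_geodesic u(1) ux uj um q(1) uq] jm by simp
  then have "d u (p m) \<le> d u q"
    by (rule interval_start_not_closer)
      (use qV pV u(1) uy um geodesic_gdist[OF p(1) p_geodesic, of m k] jm in simp_all)
  then show False using um uj uq by simp
qed

end

theorem theorem1:
  fixes V :: "'a set" and E :: "'a \<Rightarrow> 'a \<Rightarrow> bool" and i :: nat
  assumes "connected_graph V E"
    and "alpha_metric i V E"
    and "x \<in> center V E" and "y \<in> center V E"
  shows "gdist V E x y \<le> 3 * i + 2"
proof -
  interpret alpha_metric_graph V E i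
    using assms(1,2) by unfold_locales
  show ?thesis using center_gdist_le assms(3,4) .
qed

end
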